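(* Let $\mathfrak g=\mathfrak{sl}_3$, $\lambda_1,\lambda_2\in P^+$, and $w\in\{\mathrm{id},s_2\}$ such that $w(\lambda_1-\lambda_2)\in P^+$ and $w(\lambda_1-\lambda_2)(h_1)>0$. Let $a\in\{1,\ w(\lambda_1-\lambda_2)(h_1)\}$. Then for each $\nu\in P^+$ there exists an integer $0\le\ell\le a$ such that every $(s_{1,1},s_{1,2},s_{1,3},s_{2,2},s_{2,3})\in\mathbf T(\lambda_2)^\nu_{\lambda_1}$ satisfies $$a-\ell\le s_{1,2}\le\lambda_1(h_1)-\ell,\qquad s_{1,3}\le\lambda_1(h_2)-(a-\ell),\qquad s_{2,3}\ge a-\ell.$$
   Context: $\mathfrak g=\mathfrak{sl}_3$ with simple coroots $h_1,h_2$, fundamental weights $\omega_1,\omega_2$, simple reflections $s_1,s_2$, dominant integral weights $P^+$. For $\lambda\in P^+$, $\mathbf T(\lambda)$ is the set of $(s_{1,1},s_{1,2},s_{1,3},s_{2,2},s_{2,3})\in\mathbb Z_{\ge0}^5$ with $s_{1,1}+s_{1,2}+s_{1,3}=\lambda(h_1)+\lambda(h_2)$, $s_{2,2}+s_{2,3}=\lambda(h_2)$, $s_{1,1}\ge s_{2,2}$, $s_{1,1}+s_{1,2}\ge s_{2,2}+s_{2,3}$. For $\lambda,\mu,\nu\in P^+$, $\mathbf T(\lambda)^\nu_\mu$ is the set of elements of $\mathbf T(\lambda)$ satisfying $s_{1,2}\le\mu(h_1)$, $s_{1,3}\le\mu(h_2)$, $s_{2,3}+s_{1,3}\le\mu(h_2)+s_{1,2}$,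 $\nu(h_1)+\nu(h_2)=\mu(h_1)+\mu(h_2)+s_{1,1}-s_{1,3}-s_{2,3}$, and $\nu(h_2)=\mu(h_2)+s_{1,2}+s_{2,2}-s_{1,3}-s_{2,3}$. *)

theory Defs
  imports Main
begin

text \<open>Integral weights of sl_3 are encoded by their values on the simple coroots:
  a weight mu is the pair (mu(h_1), mu(h_2)) of integers, i.e. its coordinates in the
  basis of fundamental weights omega_1, omega_2.\<close>

type_synonym weight = "int \<times> int"

definition dominant :: "weight \<Rightarrow> bool" where
  "dominant mu \<longleftrightarrow> fst mu \<ge> 0 \<and> snd mu \<ge> 0"

definition wsub :: "weight \<Rightarrow> weight \<Rightarrow> weight" where
  "wsub mu nu = (fst mu - fst nu, snd mu - snd nu)"

text \<open>Simple reflections: s_i(mu) = mu - mu(h_i) alpha_i, with alpha_1 = (2,-1),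
  alpha_2 = (-1,2) in fundamental weight coordinates.\<close>

definition refl1 :: "weight \<Rightarrow> weight" where
  "refl1 mu = (- fst mu, snd mu + fst mu)"

definition refl2 :: "weight \<Rightarrow> weight" where
  "refl2 mu = (fst mu + snd mu, - snd mu)"

definition T :: "weight \<Rightarrow> (int \<times> int \<times> int \<times> int \<times> int) set" where
  "T lam = {(s11, s12, s13, s22, s23).
      s11 \<ge> 0 \<and> s12 \<ge> 0 \<and> s13 \<ge> 0 \<and> s22 \<ge> 0 \<and> s23 \<ge> 0 \<and>
      s11 + s12 + s13 = fst lam + snd lam \<and>
      s22 + s23 = snd lam \<and>
      s11 \<ge> s22 \<and> s11 + s12 \<ge> s22 + s23}"

definition Tsub :: "weight \<Rightarrow> weight \<Rightarrow> weight \<Rightarrow> (int \<times> int \<times> int \<times> int \<times> int) set" where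
  "Tsub lam mu nu = {(s11, s12, s13, s22, s23) \<in> T lam.
      s12 \<le> fst mu \<and> s13 \<le> snd mu \<and> s23 + s13 \<le> snd mu + s12 \<and>
      fst nu + snd nu = fst mu + snd mu + s11 - s13 - s23 \<and>
      snd nu = snd mu + s12 + s22 - s13 - s23}"

end

theory Submission imports Defs begin

(* Write lam1 = (m1, m2).  For a tableau s in T(lam2)^nu_lam1 the three
   required inequalities say exactly that the integer l lies between
     lo(s) = max (a - s12) (max (a + s13 - m2) (a - s23))   and   hi(s) = m1 - s12.
   So we need one integer l in [0, a] with lo(x) <= l <= hi(y) for all tableaux x, y.
   Such an l exists as soon as lo(x) <= hi(y) holds for every PAIR of tableaux with the
   same lam2, lam1, nu (plus the obvious bounds lo <= a and 0 <= hi): this is a general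
   fact about integers (lemma int_between_bounds), the witness being max 0 (Sup lo).
   The pairwise inequality is linear arithmetic in the defining constraints of the two
   tableaux, using only that 0 <= a <= (lam1 - lam2)(h1) and a <= (lam1 - lam2)(h1 + h2);
   these two bounds are what the hypotheses on w and a amount to (lemma
   weyl_hypotheses_bound_a). *)

lemma int_between_bounds:
  fixes f g :: "'b \<Rightarrow> int" and a :: int
  assumes a_nonneg: "0 \<le> a"
    and f_le_a: "\<And>x. x \<in> S \<Longrightarrow> f x \<le> a"
    and g_nonneg: "\<And>y. y \<in> S \<Longrightarrow> 0 \<le> g y"
    and f_le_g: "\<And>x y. x \<in> S \<Longrightarrow> y \<in> S \<Longrightarrow> f x \<le> g y"
  shows "\<exists>l. 0 \<le> l \<and> l \<le> a \<and> (\<forall>x\<in>S. f x \<le> l \<and> l \<le> g x)"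
proof (cases "S = {}")
  case True
  then show ?thesis using a_nonneg by auto
next
  case False
  define l where "l = max 0 (Sup (f ` S))"
  have bdd: "bdd_above (f ` S)" using f_le_a by (rule bdd_aboveI2)
  have sup_le_a: "Sup (f ` S) \<le> a" using False f_le_a by (auto intro: cSup_least)
  have sup_le_g: "Sup (f ` S) \<le> g y" if "y \<in> S" for y
    using False f_le_g that by (auto intro: cSup_least)
  have "f x \<le> l" if "x \<in> S" for x
    using cSup_upper[OF imageI[OF that] bdd] unfolding l_def by linarith
  moreover have "l \<le> g y" if "y \<in> S" for y
    using sup_le_g[OF that] g_nonneg[OF that] unfolding l_def by linarith
  moreover have "0 \<le> l" "l \<le> a" using a_nonneg sup_le_a unfolding l_def by auto
  ultimately show ?thesis by blast
qed

lemma weyl_hypotheses_bound_a: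
  assumes "w = id \<or> w = refl2"
    and "dominant (w (wsub lam1 lam2))"
    and "fst (w (wsub lam1 lam2)) > 0"
    and "a = 1 \<or> a = fst (w (wsub lam1 lam2))"
  shows "0 \<le> a" "a \<le> fst lam1 - fst lam2" "a \<le> fst lam1 - fst lam2 + (snd lam1 - snd lam2)"
  using assms by (auto simp: dominant_def wsub_def refl2_def)

lemma tableau_pair_bounds:
  fixes m1 m2 n1 n2 a :: int
  assumes "0 \<le> a" "a \<le> m1 - n1" "a \<le> m1 - n1 + (m2 - n2)"
    and "(x11, x12, x13, x22, x23) \<in> Tsub (n1, n2) (m1, m2) nu"
    and "(y11, y12, y13, y22, y23) \<in> Tsub (n1, n2) (m1, m2) nu"
  shows "max (a - x12) (max (a + x13 - m2) (a - x23)) \<le> m1 - y12"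
  using assms unfolding Tsub_def T_def by auto

lemma tableau_single_bounds:
  fixes m1 m2 n1 n2 a :: int
  assumes "(s11, s12, s13, s22, s23) \<in> Tsub (n1, n2) (m1, m2) nu"
  shows "max (a - s12) (max (a + s13 - m2) (a - s23)) \<le> a \<and> 0 \<le> m1 - s12"
  using assms unfolding Tsub_def T_def by auto

theorem proposition6p3:
  fixes lam1 lam2 nu :: weight and w :: "weight \<Rightarrow> weight" and a :: int
  assumes "dominant lam1" and "dominant lam2"
    and "w = id \<or> w = refl2"
    and "dominant (w (wsub lam1 lam2))"
    and "fst (w (wsub lam1 lam2)) > 0"
    and "a = 1 \<or> a = fst (w (wsub lam1 lam2))"
    and "dominant nu"
  shows "\<exists>l::int. 0 \<le> l \<and> l \<le> a \<and>
    (\<forall>s11 s12 s13 s22 s23. (s11, s12, s13, s22, s23) \<in> Tsub lam2 lam1 nu \<longrightarrow>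
       a - l \<le> s12 \<and> s12 \<le> fst lam1 - l \<and>
       s13 \<le> snd lam1 - (a - l) \<and> s23 \<ge> a - l)"
proof -
  obtain m1 m2 where lam1: "lam1 = (m1, m2)" by (cases lam1)
  obtain n1 n2 where lam2: "lam2 = (n1, n2)" by (cases lam2)
  note bound_a = weyl_hypotheses_bound_a[OF assms(3-6), unfolded lam1 lam2 fst_conv snd_conv]
  define lo where "lo = (\<lambda>(s11::int, s12::int, s13::int, s22::int, s23::int).
                           max (a - s12) (max (a + s13 - m2) (a - s23)))"
  define hi where "hi = (\<lambda>(s11::int, s12::int, s13::int, s22::int, s23::int). m1 - s12)"
  have pair: "lo x \<le> hi y" if "x \<in> Tsub lam2 lam1 nu" "y \<in> Tsub lam2 lam1 nu" for x y
  proof -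
    obtain x11 x12 x13 x22 x23 where x: "x = (x11, x12, x13, x22, x23)" by (cases x rule: prod_cases5)
    obtain y11 y12 y13 y22 y23 where y: "y = (y11, y12, y13, y22, y23)" by (cases y rule: prod_cases5)
    show ?thesis
      using tableau_pair_bounds[OF bound_a that[unfolded x y lam1 lam2]] by (simp add: x y lo_def hi_def)
  qed
  have single: "lo x \<le> a" "0 \<le> hi x" if "x \<in> Tsub lam2 lam1 nu" for x
  proof -
    obtain x11 x12 x13 x22 x23 where x: "x = (x11, x12, x13, x22, x23)" by (cases x rule: prod_cases5)
    show "lo x \<le> a" "0 \<le> hi x"
      using tableau_single_bounds[OF that[unfolded x lam1 lam2], where a = a] by (simp_all add: x lo_def hi_def)
  qed
  obtain l where "0 \<le> l" "l \<le> a" and between: "\<forall>s\<in>Tsub lam2 lam1 nu. lo s \<le> l \<and> l \<le> hi s"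
    using int_between_bounds[where S = "Tsub lam2 lam1 nu" and f = lo and g = hi, OF bound_a(1) single pair]
    by blast
  show ?thesis
  proof (intro exI[of _ l] conjI allI impI)
    fix s11 s12 s13 s22 s23
    assume "(s11, s12, s13, s22, s23) \<in> Tsub lam2 lam1 nu"
    then have "max (a - s12) (max (a + s13 - m2) (a - s23)) \<le> l" "l \<le> m1 - s12"
      using between by (auto simp: lo_def hi_def)
    then show "a - l \<le> s12" "s12 \<le> fst lam1 - l" "s13 \<le> snd lam1 - (a - l)" "a - l \<le> s23"
      by (simp_all add: lam1)
  qed fact+
qed

end
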